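(* Let $G$ be a group given by a presentation $\langle X \mid R\rangle$ in which $X$ is a (possibly infinite) set of generators, each $x\in X$ satisfies $x^2=e$ (i.e. the relations $x^2=e$ hold for all $x \in X$), and every relation in $R$ has even length. For $I\subseteq X$, let $G_I$ denote the subgroup of $G$ generated by $I$ and let $G^I=\{w\in G : l(wx)>l(w)\ \text{for all } x\in I\}$. Then every element $w\in G$ has a factorisation $w=ab$ with $a\in G^I$, $b\in G_I$ and $l(w)=l(a)+l(b)$.
   Context: For a group $G$ with presentation $\langle X\mid R\rangle$, every $w\in G$ can be written as $x_1^{a_1}\cdots x_r^{a_r}$ with $x_j\in X$, $a_j=\pm1$; the length $l(w)$ is the smallest such $r$, and a reduced expression of $w$ is an expression of $w$ as a product of $l(w)$ elements of $X\cup X^{-1}$. If a relation in $R$ has the form $u=v$ with $u,v$ in the free group $F(X)$, its length is the length of the word $uv^{-1}$ in $F(X)$. *)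

theory Defs
  imports Main
begin

text \<open>Words in the free group F(X): lists of letters; a letter (x, True) stands for x,
  (x, False) for x^{-1}.\<close>

type_synonym 'x letter = "'x \<times> bool"
type_synonym 'x word = "'x letter list"

definition inv_letter :: "'x letter \<Rightarrow> 'x letter" where
  "inv_letter l = (fst l, \<not> snd l)"

definition inv_word :: "'x word \<Rightarrow> 'x word" where
  "inv_word w = rev (map inv_letter w)"

definition word_over :: "'x set \<Rightarrow> 'x word \<Rightarrow> bool" where
  "word_over X w \<longleftrightarrow> fst ` set w \<subseteq> X"

inductive free_eq :: "'x word \<Rightarrow> 'x word \<Rightarrow> bool" where
  free_refl: "free_eq w w"
| free_sym: "free_eq u v \<Longrightarrow> free_eq v u"
| free_trans: "free_eq u v \<Longrightarrow> free_eq v w \<Longrightarrow> free_eq u w"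
| free_cancel: "free_eq (a @ [l, inv_letter l] @ b) (a @ b)"

definition free_length :: "'x word \<Rightarrow> nat" where
  "free_length w = (LEAST n. \<exists>u. free_eq u w \<and> length u = n)"

inductive pres_eq :: "'x set \<Rightarrow> ('x word \<times> 'x word) set \<Rightarrow> 'x word \<Rightarrow> 'x word \<Rightarrow> bool"
  for X R where
  pres_refl: "pres_eq X R w w"
| pres_sym: "pres_eq X R u v \<Longrightarrow> pres_eq X R v u"
| pres_trans: "pres_eq X R u v \<Longrightarrow> pres_eq X R v w \<Longrightarrow> pres_eq X R u w"
| pres_cancel: "pres_eq X R (a @ [l, inv_letter l] @ b) (a @ b)"
| pres_rel: "(u, v) \<in> R \<Longrightarrow> pres_eq X R (a @ u @ b) (a @ v @ b)"
| pres_inv: "x \<in> X \<Longrightarrow> pres_eq X R (a @ [(x, True), (x, True)] @ b) (a @ b)"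

definition glen :: "'x set \<Rightarrow> ('x word \<times> 'x word) set \<Rightarrow> 'x word \<Rightarrow> nat" where
  "glen X R w = (LEAST n. \<exists>u. word_over X u \<and> pres_eq X R u w \<and> length u = n)"

definition in_GI :: "'x set \<Rightarrow> ('x word \<times> 'x word) set \<Rightarrow> 'x set \<Rightarrow> 'x word \<Rightarrow> bool" where
  "in_GI X R I w \<longleftrightarrow> (\<exists>u. word_over I u \<and> pres_eq X R u w)"

definition in_GupI :: "'x set \<Rightarrow> ('x word \<times> 'x word) set \<Rightarrow> 'x set \<Rightarrow> 'x word \<Rightarrow> bool" where
  "in_GupI X R I w \<longleftrightarrow> (\<forall>x\<in>I. glen X R (w @ [(x, True)]) > glen X R w)"

end

theory Submission
  imports Defs
begin

text \<open>Since every relation has even length, the parity of the length of a word is an invariant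
  of the element of G it represents, so multiplying by a generator x changes l by exactly one.
  Among all factorisations w = ab with b \<in> G_I and l(w) = l(a) + l(b) choose one with l(a)
  minimal. If l(ax) < l(a) for some x \<in> I, then l(ax) = l(a) - 1 and w = (ax)(xb) is again
  such a factorisation, since l(xb) \<le> l(b) + 1; this contradicts minimality, so a \<in> G^I.\<close>

lemma word_over_Nil [simp]: "word_over X []"
  by (simp add: word_over_def)

lemma word_over_Cons [simp]: "word_over X (l # w) \<longleftrightarrow> fst l \<in> X \<and> word_over X w"
  by (simp add: word_over_def)

lemma word_over_append [simp]: "word_over X (u @ v) \<longleftrightarrow> word_over X u \<and> word_over X v"
  by (auto simp add: word_over_def)

lemma pres_eq_in_context:
  "pres_eq X R u v \<Longrightarrow> pres_eq X R (c @ u @ d) (c @ v @ d)"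
proof (induction rule: pres_eq.induct)
  case (pres_cancel a l b)
  show ?case
    using pres_eq.pres_cancel[of X R "c @ a" l "b @ d"] by simp
next
  case (pres_rel u v a b)
  show ?case
    using pres_eq.pres_rel[OF pres_rel, where a = "c @ a" and b = "b @ d"] by simp
next
  case (pres_inv x a b)
  show ?case
    using pres_eq.pres_inv[OF pres_inv, where R = R and a = "c @ a" and b = "b @ d"] by simp
qed (auto intro: pres_eq.intros)

lemma pres_eq_append:
  assumes "pres_eq X R u u'" and "pres_eq X R v v'"
  shows "pres_eq X R (u @ v) (u' @ v')"
  using pres_eq_in_context[OF assms(1), of "[]" v] pres_eq_in_context[OF assms(2), of u' "[]"]
  by (auto intro: pres_trans)

lemma free_eq_length_parity: "free_eq u v \<Longrightarrow> even (length u + length v)"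
  by (induction rule: free_eq.induct) auto

lemma free_length_parity: "even (free_length w + length w)"
proof -
  have "\<exists>n u. free_eq u w \<and> length u = n"
    using free_refl by blast
  from LeastI_ex[OF this] obtain u where "free_eq u w" "length u = free_length w"
    unfolding free_length_def by blast
  then show ?thesis
    using free_eq_length_parity by metis
qed

lemma even_relation_length:
  assumes "even (free_length (u @ inv_word v))"
  shows "even (length u + length v)"
  using assms free_length_parity[of "u @ inv_word v"] by (simp add: inv_word_def)

lemma pres_eq_length_parity:
  assumes "\<forall>(u, v)\<in>R. even (length u + length v)" and "pres_eq X R u v"
  shows "even (length u + length v)"
  using assms(2)
proof induction
  case (pres_rel u v a b)
  then show ?case
    using assms(1) by fastforce
qed auto

lemma glen_witness:
  assumes "word_over X w"
  obtains u where "word_over X u" "pres_eq X R u w" "length u = glen X R w"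
proof -
  have "\<exists>n u. word_over X u \<and> pres_eq X R u w \<and> length u = n"
    using assms pres_refl by blast
  from LeastI_ex[OF this] show ?thesis
    using that unfolding glen_def by blast
qed

lemma glen_le_length: "word_over X u \<Longrightarrow> pres_eq X R u w \<Longrightarrow> glen X R w \<le> length u"
  unfolding glen_def by (rule Least_le) blast

lemma glen_pres_eq: "pres_eq X R v w \<Longrightarrow> glen X R v = glen X R w"
  unfolding glen_def by (metis pres_sym pres_trans)

lemma glen_Nil [simp]: "glen X R [] = 0"
  using glen_le_length[of X "[]" R "[]"] by (simp add: pres_refl)

lemma glen_generator_le: "x \<in> X \<Longrightarrow> glen X R [(x, True)] \<le> 1"
  using glen_le_length[of X "[(x, True)]" R "[(x, True)]"] by (simp add: pres_refl)

lemma glen_append_le: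
  assumes "word_over X u" and "word_over X v"
  shows "glen X R (u @ v) \<le> glen X R u + glen X R v"
proof -
  obtain u' where "word_over X u'" "pres_eq X R u' u" "length u' = glen X R u"
    using glen_witness[OF assms(1)] .
  moreover obtain v' where "word_over X v'" "pres_eq X R v' v" "length v' = glen X R v"
    using glen_witness[OF assms(2)] .
  ultimately show ?thesis
    using glen_le_length[of X "u' @ v'" R "u @ v"] pres_eq_append by fastforce
qed

lemma glen_length_parity:
  assumes "\<forall>(u, v)\<in>R. even (length u + length v)" and "word_over X w"
  shows "even (glen X R w + length w)"
  using glen_witness[OF assms(2)] pres_eq_length_parity[OF assms(1)] by metis

lemma glen_append_generator:
  assumes "\<forall>(u, v)\<in>R. even (length u + length v)" and "x \<in> X" and "word_over X a"
  shows "glen X R (a @ [(x, True)]) = glen X R a + 1 \<or> glen X R a = glen X R (a @ [(x, True)]) + 1"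
proof -
  let ?ax = "a @ [(x, True)]"
  have "glen X R ?ax \<le> glen X R a + 1"
    using glen_append_le[of X a "[(x, True)]" R] glen_generator_le[of x X R] assms by fastforce
  moreover have "glen X R a \<le> glen X R ?ax + 1"
  proof -
    have "pres_eq X R (?ax @ [(x, True)]) a"
      using pres_inv[OF assms(2), of R a "[]"] by simp
    then have "glen X R a = glen X R (?ax @ [(x, True)])"
      by (metis glen_pres_eq)
    also have "\<dots> \<le> glen X R ?ax + glen X R [(x, True)]"
      by (rule glen_append_le) (use assms in simp_all)
    finally show ?thesis
      using glen_generator_le[OF assms(2), of R] by linarith
  qed
  moreover have "odd (glen X R ?ax + glen X R a)"
    using glen_length_parity[OF assms(1), of X a] glen_length_parity[OF assms(1), of X ?ax] assms
    by simp
  ultimately show ?thesis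
    by presburger
qed

lemma in_GI_Cons:
  assumes "x \<in> I" and "in_GI X R I b"
  shows "in_GI X R I ((x, True) # b)"
proof -
  obtain u where "word_over I u" "pres_eq X R u b"
    using assms(2) unfolding in_GI_def by blast
  then show ?thesis
    unfolding in_GI_def using assms(1) pres_eq_in_context[of X R u b "[(x, True)]" "[]"]
    by (intro exI[of _ "(x, True) # u"]) simp
qed

definition reduced_factorisation ::
  "'x set \<Rightarrow> ('x word \<times> 'x word) set \<Rightarrow> 'x set \<Rightarrow> 'x word \<Rightarrow> 'x word \<Rightarrow> 'x word \<Rightarrow> bool" where
  "reduced_factorisation X R I w a b \<longleftrightarrow> word_over X a \<and> word_over X b \<and> in_GI X R I b
     \<and> pres_eq X R w (a @ b) \<and> glen X R w = glen X R a + glen X R b"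

lemma reduced_factorisation_trivial:
  "word_over X w \<Longrightarrow> reduced_factorisation X R I w w []"
  unfolding reduced_factorisation_def in_GI_def
  by (auto intro: pres_refl exI[of _ "[]"])

lemma reduced_factorisation_shift:
  assumes fact: "reduced_factorisation X R I w a b"
    and "I \<subseteq> X" and "x \<in> I" and shorter: "glen X R (a @ [(x, True)]) < glen X R a"
  shows "reduced_factorisation X R I w (a @ [(x, True)]) ((x, True) # b)"
proof -
  let ?ax = "a @ [(x, True)]" and ?xb = "(x, True) # b"
  have x: "x \<in> X"
    using assms by blast
  have a: "word_over X a" and b: "word_over X b" and "in_GI X R I b"
    and w: "pres_eq X R w (a @ b)" and len: "glen X R w = glen X R a + glen X R b"
    using fact unfolding reduced_factorisation_def by auto
  have "pres_eq X R (?ax @ ?xb) (a @ b)"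
    using pres_inv[OF x, of R a b] by simp
  then have w': "pres_eq X R w (?ax @ ?xb)"
    using w by (metis pres_sym pres_trans)
  have "glen X R w \<le> glen X R ?ax + glen X R ?xb"
    using glen_pres_eq[OF w'] glen_append_le[of X ?ax ?xb R] a b x by simp
  moreover have "glen X R ?xb \<le> glen X R b + 1"
    using glen_append_le[of X "[(x, True)]" b R] glen_generator_le[OF x, of R] b x by simp
  ultimately have "glen X R w = glen X R ?ax + glen X R ?xb"
    using len shorter by linarith
  then show ?thesis
    unfolding reduced_factorisation_def
    using a b x w' in_GI_Cons[OF \<open>x \<in> I\<close> \<open>in_GI X R I b\<close>] by simp
qed

theorem proposition2p2:
  fixes X :: "'x set" and R :: "('x word \<times> 'x word) set" and I :: "'x set" and w :: "'x word"
  assumes "\<forall>(u, v)\<in>R. word_over X u \<and> word_over X v"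
    and "\<forall>(u, v)\<in>R. even (free_length (u @ inv_word v))"
    and "I \<subseteq> X"
    and "word_over X w"
  shows "\<exists>a b. word_over X a \<and> word_over X b \<and> in_GupI X R I a \<and> in_GI X R I b
           \<and> pres_eq X R w (a @ b) \<and> glen X R w = glen X R a + glen X R b"
proof -
  have even_R: "\<forall>(u, v)\<in>R. even (length u + length v)"
    using assms(2) even_relation_length by blast
  obtain a b where fact: "reduced_factorisation X R I w a b"
    and minimal: "\<And>a' b'. reduced_factorisation X R I w a' b' \<Longrightarrow> glen X R a \<le> glen X R a'"
    using ex_has_least_nat[of "\<lambda>(a, b). reduced_factorisation X R I w a b" "(w, [])"
        "\<lambda>(a, b). glen X R a"] reduced_factorisation_trivial[OF assms(4)] by fastforce
  have "glen X R a < glen X R (a @ [(x, True)])" if "x \<in> I" for x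
  proof (rule ccontr)
    assume "\<not> ?thesis"
    then have "glen X R (a @ [(x, True)]) < glen X R a"
      using glen_append_generator[OF even_R, of x X a] that assms(3) fact
      unfolding reduced_factorisation_def by auto
    then show False
      using minimal[OF reduced_factorisation_shift[OF fact assms(3) that]] by linarith
  qed
  then show ?thesis
    using fact unfolding reduced_factorisation_def in_GupI_def by blast
qed

end
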